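(* Let $\mathcal{A}$ be a random set in $\mathcal{B}(n,\alpha)$, let $X := \deg \operatorname{lcm}\big([\mathcal{A}]_q\big)$, and let $f(\alpha) := \frac{3}{\pi^2}\cdot\frac{\alpha\,\mathrm{Li}_2(1-\alpha)}{1-\alpha}$ for $\alpha\in(0,1)$ and $f(1):=\frac{3}{\pi^2}$, where $\mathrm{Li}_2(z) := \sum_{k\geq 1} z^k/k^2$. Then, as $\alpha n \to +\infty$, $X \sim f(\alpha)\, n^2$ with probability $1-o(1)$; that is, for every $\varepsilon>0$ and $\delta>0$ there exists $M>0$ such that for all positive integers $n$ and all $\alpha\in(0,1]$ with $\alpha n \geq M$, \[ \mathbb{P}\big[\, |X - f(\alpha) n^2| > \varepsilon f(\alpha) n^2 \,\big] \leq \delta . \]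
   Context: For a positive integer $n$ and $\alpha\in[0,1]$, $\mathcal{B}(n,\alpha)$ denotes the probabilistic model in which a random set $\mathcal{A}\subseteq\{1,\dots,n\}$ is constructed by including each element of $\{1,\dots,n\}$ independently with probability $\alpha$. For an indeterminate $q$ and a positive integer $k$, $[k]_q := 1+q+\cdots+q^{k-1}\in\mathbb{Z}[q]$, and for a set $\mathcal{S}$ of positive integers $[\mathcal{S}]_q := \{[k]_q : k\in\mathcal{S}\}$. The least common multiple is taken in $\mathbb{Q}[q]$ (monic), with $\operatorname{lcm}(\varnothing)=1$ of degree $0$. *)

theory Defs
  imports "HOL-Analysis.Analysis" "HOL-Computational_Algebra.Computational_Algebra" "HOL-Computational_Algebra.Field_as_Ring"
begin

definition qint :: "nat \<Rightarrow> rat poly" where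
  "qint k = (\<Sum>i<k. monom 1 i)"

text \<open>X(A) = deg lcm([A]_q), the lcm taken (monic, normalized) in Q[q]; Lcm {} = 1.\<close>
definition degLcmQ :: "nat set \<Rightarrow> nat" where
  "degLcmQ A = degree (Lcm (qint ` A))"

text \<open>Probability of an event P in the model B(n, alpha): each element of {1..n}
  is included independently with probability alpha.\<close>
definition probB :: "nat \<Rightarrow> real \<Rightarrow> (nat set \<Rightarrow> bool) \<Rightarrow> real" where
  "probB n \<alpha> P = (\<Sum>A\<in>Pow {1..n}. if P A then \<alpha> ^ card A * (1 - \<alpha>) ^ (n - card A) else 0)"

definition Li2 :: "real \<Rightarrow> real" where
  "Li2 z = (\<Sum>k. z ^ (Suc k) / (real (Suc k))\<^sup>2)"

definition fdens :: "real \<Rightarrow> real" where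
  "fdens \<alpha> = (if \<alpha> = 1 then 3 / pi\<^sup>2 else 3 / pi\<^sup>2 * (\<alpha> * Li2 (1 - \<alpha>) / (1 - \<alpha>)))"

end

theory Submission
  imports Defs "HOL-Number_Theory.Totient"
begin

(* Over the rationals X^k - 1 is squarefree, and its irreducible factors are those of the
   cyclotomic polynomials Phi_d for d dividing k, of degree totient d. Since [k]_q is
   (X^k - 1) / (X - 1), the degree of lcm([A]_q) is the sum of totient d over the d >= 2 that
   divide some element of A. Hence X is the sum of totient d over 2 <= d <= n minus a weighted sum
   of the indicators "A avoids the multiples of d". Its mean is
   alpha * sum_j (1 - alpha)^j S(n div (j + 1)) with S(N) the sum of totient d over 2 <= d <= N,
   which is f(alpha) n^2 + o(alpha n^2) because S(N) = 3 N^2 / pi^2 + o(N^2). Two indicators are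
   correlated only through the common multiples, which bounds the variance by alpha n^3, and
   Chebyshev's inequality at a threshold of order alpha n^2 concludes. *)

section \<open>The degree of the lcm of q-integers\<close>

lemma eq_if_divisor_sums_eq:
  fixes f g :: "nat \<Rightarrow> 'a :: cancel_comm_monoid_add"
  assumes sums: "\<And>m. m > 0 \<Longrightarrow> (\<Sum>d | d dvd m. f d) = (\<Sum>d | d dvd m. g d)"
  shows "n > 0 \<Longrightarrow> f n = g n"
proof (induction n rule: less_induct)
  case (less m)
  have split_off_m: "(\<Sum>d | d dvd m. h d) = h m + (\<Sum>d | d dvd m \<and> d \<noteq> m. h d)"
    for h :: "nat \<Rightarrow> 'a"
  proof -
    have "{d. d dvd m} = insert m {d. d dvd m \<and> d \<noteq> m}" by auto
    moreover have "finite {d. d dvd m \<and> d \<noteq> m}"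
      using less.prems by (auto intro: finite_subset[of _ "{..m}"] dest: dvd_imp_le)
    ultimately show ?thesis by simp
  qed
  have "(\<Sum>d | d dvd m \<and> d \<noteq> m. f d) = (\<Sum>d | d dvd m \<and> d \<noteq> m. g d)"
  proof (rule sum.cong)
    fix d assume "d \<in> {d. d dvd m \<and> d \<noteq> m}"
    then have "d < m" "d > 0" using less.prems by (auto dest: dvd_imp_le intro: gr0I)
    then show "f d = g d" using less.IH by blast
  qed simp
  then show ?case
    using sums[OF less.prems] unfolding split_off_m by simp
qed

lemma degree_normalize_field_poly [simp]: "degree (normalize (f :: 'a :: field_gcd poly)) = degree f"
proof (cases "f = 0")
  case False
  have "degree (unit_factor f * normalize f) = degree (unit_factor f) + degree (normalize f)"
    using False by (intro degree_mult_eq) auto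
  moreover have "degree (unit_factor f) = 0"
    using False is_unit_iff_degree[of "unit_factor f"] by simp
  ultimately show ?thesis by simp
qed simp

lemma degree_squarefree_eq_sum_prime_factors:
  fixes f :: "'a :: field_gcd poly"
  assumes "f \<noteq> 0" "squarefree f"
  shows "degree f = (\<Sum>p\<in>prime_factors f. degree p)"
proof -
  have "normalize f = (\<Prod>p\<in>prime_factors f. p ^ multiplicity p f)"
    using prod_prime_factors[OF assms(1)] by simp
  also have "\<dots> = (\<Prod>p\<in>prime_factors f. p)"
  proof (rule prod.cong)
    fix p assume "p \<in> prime_factors f"
    then have "multiplicity p f = 1" using assms squarefree_factorial_semiring' by blast
    then show "p ^ multiplicity p f = p" by simp
  qed simp
  finally have "degree f = degree (\<Prod>p\<in>prime_factors f. p)"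
    by (metis degree_normalize_field_poly)
  also have "\<dots> = (\<Sum>p\<in>prime_factors f. degree p)"
    by (rule degree_prod_sum_eq) auto
  finally show ?thesis .
qed

lemma sq_dvd_imp_dvd_pderiv:
  fixes p f :: "'a :: idom poly"
  assumes "p ^ 2 dvd f"
  shows "p dvd pderiv f"
proof -
  obtain h where "f = p * p * h"
    using assms by (auto simp: power2_eq_square elim!: dvdE)
  then have "pderiv f = p * (p * pderiv h + 2 * h * pderiv p)"
    by (simp add: pderiv_mult algebra_simps)
  then show ?thesis by simp
qed

definition unity_poly :: "nat \<Rightarrow> rat poly" where
  "unity_poly k = monom 1 k - 1"

lemma unity_poly_0 [simp]: "unity_poly 0 = 0"
  by (simp add: unity_poly_def)

lemma unity_poly_1: "unity_poly 1 = [:-1, 1:]"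
  by (simp add: unity_poly_def monom_Suc monom_0 one_pCons)

lemma unity_poly_eq_0_iff [simp]: "unity_poly k = 0 \<longleftrightarrow> k = 0"
  by (auto simp: unity_poly_def monom_eq_1_iff)

lemma degree_unity_poly [simp]: "degree (unity_poly k) = k"
proof (cases "k = 0")
  case False
  have "degree (monom (1::rat) k + (- 1)) = degree (monom (1::rat) k)"
    using False by (intro degree_add_eq_left) (simp add: degree_monom_eq)
  then show ?thesis by (simp add: unity_poly_def degree_monom_eq)
qed simp

lemma unity_poly_eq_mult_qint: "unity_poly k = [:-1, 1:] * qint k"
proof (induction k)
  case (Suc k)
  have "[:-1, 1:] * qint (Suc k) = unity_poly k + [:-1, 1:] * monom 1 k"
    by (simp add: qint_def Suc algebra_simps)
  also have "[:-1, 1:] * monom 1 k = monom 1 (Suc k) - monom (1::rat) k"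
    by (simp add: unity_poly_1[symmetric] unity_poly_def algebra_simps mult_monom)
  finally show ?case by (simp add: unity_poly_def)
qed (simp add: qint_def unity_poly_def)

lemma poly_qint_1: "poly (qint k) 1 = of_nat k"
  by (simp add: qint_def poly_sum poly_monom)

lemma qint_eq_0_iff [simp]: "qint k = 0 \<longleftrightarrow> k = 0"
  using poly_qint_1[of k] by (auto simp: qint_def)

lemma unity_poly_dvd:
  assumes "a dvd b"
  shows "unity_poly a dvd unity_poly b"
proof -
  have "unity_poly a dvd unity_poly (a * m)" for m
  proof (induction m)
    case (Suc m)
    have "unity_poly (a * Suc m) = monom 1 a * unity_poly (a * m) + unity_poly a"
      by (simp add: unity_poly_def algebra_simps mult_monom)
    then show ?case using Suc by simp
  qed simp
  then show ?thesis using assms by (auto elim!: dvdE)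
qed

lemma squarefree_unity_poly:
  assumes "k > 0"
  shows "squarefree (unity_poly k)"
proof (rule squarefreeI)
  fix p assume sq: "p ^ 2 dvd unity_poly k"
  then have "p dvd unity_poly k"
    by (meson dvd_power dvd_trans zero_less_numeral)
  moreover have "p dvd monom 1 (k - 1)"
  proof -
    have "p dvd pderiv (unity_poly k)" using sq by (rule sq_dvd_imp_dvd_pderiv)
    also have "pderiv (unity_poly k) = smult (of_nat k) (monom 1 (k - 1))"
      by (simp add: unity_poly_def pderiv_diff pderiv_monom smult_monom)
    finally show ?thesis using assms by (simp add: dvd_smult_cancel)
  qed
  then have "p dvd monom 1 1 * monom 1 (k - 1)" by simp
  ultimately have "p dvd monom 1 k - unity_poly k"
    using assms by (simp add: mult_monom dvd_diff)
  then show "p dvd 1" by (simp add: unity_poly_def)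
qed

lemma prime_dvd_unity_poly_diff:
  fixes p :: "rat poly"
  assumes p: "prime p" and "b \<le> a" "p dvd unity_poly a" "p dvd unity_poly b"
  shows "p dvd unity_poly (a - b)"
proof -
  have "unity_poly a = monom 1 b * unity_poly (a - b) + unity_poly b"
    using \<open>b \<le> a\<close> by (simp add: unity_poly_def algebra_simps mult_monom)
  then have "p dvd monom 1 b * unity_poly (a - b)"
    using assms(3,4) by (metis add_diff_cancel_right' dvd_diff)
  moreover have "\<not> p dvd monom 1 b"
  proof
    assume "p dvd monom 1 b"
    then have "p dvd monom 1 b - unity_poly b" using assms(4) by (rule dvd_diff)
    with p show False by (simp add: unity_poly_def)
  qed
  ultimately show ?thesis using p prime_dvd_mult_iff by blast
qed

lemma prime_dvd_unity_poly_gcd: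
  fixes p :: "rat poly"
  assumes p: "prime p"
  shows "p dvd unity_poly a \<Longrightarrow> p dvd unity_poly b \<Longrightarrow> p dvd unity_poly (gcd a b)"
proof (induction a b rule: gcd_nat_induct)
  case (step m n)
  have "p dvd unity_poly (m - n * (m div n))"
    using step unity_poly_dvd[of n "n * (m div n)"]
    by (intro prime_dvd_unity_poly_diff[OF p]) auto
  then have "p dvd unity_poly (m mod n)" by (simp add: minus_mult_div_eq_mod)
  then show ?case using step by (simp add: gcd_non_0_nat)
qed simp

definition unity_order :: "rat poly \<Rightarrow> nat" where
  "unity_order p = (LEAST k. 0 < k \<and> p dvd unity_poly k)"

lemma unity_order_le: "0 < k \<Longrightarrow> p dvd unity_poly k \<Longrightarrow> unity_order p \<le> k"
  unfolding unity_order_def by (rule Least_le) simp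

lemma unity_order:
  assumes "p dvd unity_poly m" "m > 0"
  shows "0 < unity_order p" "p dvd unity_poly (unity_order p)"
proof -
  have "0 < unity_order p \<and> p dvd unity_poly (unity_order p)"
    unfolding unity_order_def by (rule LeastI[of _ m]) (use assms in auto)
  then show "0 < unity_order p" "p dvd unity_poly (unity_order p)" by auto
qed

lemma prime_dvd_unity_poly_iff:
  fixes p :: "rat poly"
  assumes p: "prime p" and "p dvd unity_poly m" "m > 0"
  shows "p dvd unity_poly k \<longleftrightarrow> unity_order p dvd k"
proof
  assume "unity_order p dvd k"
  then show "p dvd unity_poly k"
    using unity_order(2)[OF assms(2,3)] unity_poly_dvd dvd_trans by blast
next
  assume k: "p dvd unity_poly k"
  let ?o = "unity_order p"
  have o: "0 < ?o" "p dvd unity_poly ?o" using unity_order[OF assms(2,3)] by auto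
  show "?o dvd k"
  proof (cases "k = 0")
    case False
    have "p dvd unity_poly (gcd k ?o)" using prime_dvd_unity_poly_gcd[OF p k o(2)] .
    then have "?o \<le> gcd k ?o" using False by (intro unity_order_le) auto
    moreover have "gcd k ?o \<le> ?o" using o(1) by (simp add: gcd_le2_nat)
    ultimately have "gcd k ?o = ?o" by simp
    then show ?thesis by (metis gcd_dvd1)
  qed simp
qed

lemma prime_dvd_unity_poly_1_iff:
  fixes p :: "rat poly"
  assumes p: "prime p"
  shows "p dvd unity_poly 1 \<longleftrightarrow> p = unity_poly 1"
proof
  assume "p dvd unity_poly 1"
  moreover have "prime (unity_poly 1)"
    unfolding unity_poly_1 prime_def
    by (simp add: prime_elem_linear_field_poly normalize_poly_eq_map_poly map_poly_pCons)
  ultimately show "p = unity_poly 1"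
    using p by (metis primes_dvd_imp_eq)
qed simp

(* The irreducible factors of the d-th cyclotomic polynomial. *)
definition cyclo_factors :: "nat \<Rightarrow> rat poly set" where
  "cyclo_factors d = {p. prime p \<and> p dvd unity_poly d \<and> unity_order p = d}"

lemma cyclo_factors_disjoint: "d \<noteq> e \<Longrightarrow> cyclo_factors d \<inter> cyclo_factors e = {}"
  by (auto simp: cyclo_factors_def)

lemma prime_factors_unity_poly:
  assumes "m > 0"
  shows "prime_factors (unity_poly m) = (\<Union>d\<in>{d. d dvd m}. cyclo_factors d)"
proof (intro equalityI subsetI)
  fix p assume "p \<in> prime_factors (unity_poly m)"
  then have p: "prime p" "p dvd unity_poly m" by auto
  then have "unity_order p dvd m" "p dvd unity_poly (unity_order p)"
    using prime_dvd_unity_poly_iff[OF p assms] unity_order(2)[OF p(2) assms] by auto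
  then show "p \<in> (\<Union>d\<in>{d. d dvd m}. cyclo_factors d)"
    using p by (auto simp: cyclo_factors_def)
next
  fix p assume "p \<in> (\<Union>d\<in>{d. d dvd m}. cyclo_factors d)"
  then obtain d where "d dvd m" "prime p" "p dvd unity_poly d"
    by (auto simp: cyclo_factors_def)
  then have "p dvd unity_poly m" using unity_poly_dvd dvd_trans by blast
  then show "p \<in> prime_factors (unity_poly m)"
    using \<open>prime p\<close> assms by (intro prime_factorsI) auto
qed

lemma finite_cyclo_factors:
  assumes "d > 0"
  shows "finite (cyclo_factors d)"
proof (rule finite_subset)
  show "cyclo_factors d \<subseteq> prime_factors (unity_poly d)"
    using assms by (auto simp: cyclo_factors_def intro: prime_factorsI)
qed simp

lemma sum_divisors_degree_cyclo_factors:
  assumes "m > 0"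
  shows "(\<Sum>d | d dvd m. \<Sum>p\<in>cyclo_factors d. degree p) = m"
proof -
  have "m = (\<Sum>p\<in>prime_factors (unity_poly m). degree p)"
    using degree_squarefree_eq_sum_prime_factors[OF _ squarefree_unity_poly] assms by simp
  also have "\<dots> = (\<Sum>d | d dvd m. \<Sum>p\<in>cyclo_factors d. degree p)"
    unfolding prime_factors_unity_poly[OF assms]
  proof (rule sum.UNION_disjoint)
    show "\<forall>d\<in>{d. d dvd m}. finite (cyclo_factors d)"
      using assms by (auto intro!: finite_cyclo_factors intro: gr0I)
    show "finite {d. d dvd m}" using assms by simp
    show "\<forall>d\<in>{d. d dvd m}. \<forall>e\<in>{d. d dvd m}. d \<noteq> e \<longrightarrow> cyclo_factors d \<inter> cyclo_factors e = {}"
      using cyclo_factors_disjoint by blast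
  qed
  finally show ?thesis by (rule sym)
qed

lemma sum_degree_cyclo_factors: "d > 0 \<Longrightarrow> (\<Sum>p\<in>cyclo_factors d. degree p) = totient d"
  by (rule eq_if_divisor_sums_eq) (simp add: sum_divisors_degree_cyclo_factors totient_divisor_sum)

lemma prime_factors_qint:
  assumes "a > 0"
  shows "prime_factors (qint a) = (\<Union>d\<in>{d. d dvd a \<and> d \<noteq> 1}. cyclo_factors d)"
proof -
  have "p dvd qint a \<longleftrightarrow> p dvd unity_poly a \<and> unity_order p \<noteq> 1" if p: "prime p" for p
  proof -
    have "\<not> [:-1, 1:] dvd qint a"
      using assms poly_eq_0_iff_dvd[of "qint a" 1] by (simp add: poly_qint_1)
    then have "\<not> unity_poly 1 dvd qint a" unfolding unity_poly_1 .
    moreover have "unity_poly a = unity_poly 1 * qint a"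
      by (metis unity_poly_eq_mult_qint unity_poly_1)
    ultimately have "p dvd qint a \<longleftrightarrow> p dvd unity_poly a \<and> \<not> p dvd unity_poly 1"
      using p prime_dvd_unity_poly_1_iff[OF p] prime_dvd_mult_iff by (metis dvd_mult)
    moreover have "p dvd unity_poly a \<Longrightarrow> p dvd unity_poly 1 \<longleftrightarrow> unity_order p = 1"
      using prime_dvd_unity_poly_iff[OF p _ assms] by simp
    ultimately show ?thesis by blast
  qed
  moreover have "p dvd unity_poly a \<longleftrightarrow> (\<exists>d. d dvd a \<and> p dvd unity_poly d \<and> unity_order p = d)"
    if "prime p" for p
  proof
    assume "p dvd unity_poly a"
    then show "\<exists>d. d dvd a \<and> p dvd unity_poly d \<and> unity_order p = d"
      using prime_dvd_unity_poly_iff[OF that _ assms] unity_order(2)[OF _ assms] by blast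
  qed (use unity_poly_dvd dvd_trans in blast)
  ultimately show ?thesis
    using assms by (auto simp: in_prime_factors_iff cyclo_factors_def)
qed

lemma Lcm_qint_nonzero: "finite A \<Longrightarrow> 0 \<notin> A \<Longrightarrow> Lcm (qint ` A) \<noteq> 0"
  by (auto simp: Lcm_0_iff)

lemma prime_factors_Lcm_qint:
  assumes "finite A" "0 \<notin> A"
  shows "prime_factors (Lcm (qint ` A)) = (\<Union>a\<in>A. prime_factors (qint a))"
  using assms
proof (induction A rule: finite_induct)
  case (insert a A)
  then show ?case using Lcm_qint_nonzero[of A] by simp
qed simp

lemma squarefree_Lcm_qint:
  assumes "finite A" "0 \<notin> A"
  shows "squarefree (Lcm (qint ` A))"
proof -
  have "Lcm (qint ` A) dvd unity_poly (\<Prod>A)"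
  proof (rule Lcm_least)
    fix b assume "b \<in> qint ` A"
    then obtain a where a: "a \<in> A" "b = qint a" by auto
    have "qint a dvd unity_poly a" by (metis dvd_triv_right unity_poly_eq_mult_qint)
    also have "unity_poly a dvd unity_poly (\<Prod>A)" using a assms by (intro unity_poly_dvd dvd_prodI)
    finally show "b dvd unity_poly (\<Prod>A)" using a by simp
  qed
  moreover have "\<Prod>A > 0" using assms by (metis gr0I prod_zero_iff)
  ultimately show ?thesis using squarefree_unity_poly squarefree_mono by blast
qed

theorem degLcmQ_eq_sum_totient:
  assumes "A \<subseteq> {1..n}"
  shows "degLcmQ A = (\<Sum>d | d \<in> {2..n} \<and> (\<exists>a\<in>A. d dvd a). totient d)"
proof -
  let ?D = "{d. d \<in> {2..n} \<and> (\<exists>a\<in>A. d dvd a)}"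
  have A: "finite A" "0 \<notin> A" using assms finite_subset by auto
  have "?D = {d. \<exists>a\<in>A. d dvd a \<and> d \<noteq> 1}"
  proof (intro equalityI subsetI)
    fix d assume "d \<in> {d. \<exists>a\<in>A. d dvd a \<and> d \<noteq> 1}"
    then obtain a where a: "a \<in> A" "d dvd a" "d \<noteq> 1" by blast
    then have "1 \<le> a" "a \<le> n" using assms by auto
    then have "d \<le> n" "d \<noteq> 0" using a by (auto dest: dvd_imp_le)
    then show "d \<in> ?D" using a by auto
  qed auto
  moreover have "prime_factors (qint a) = (\<Union>d\<in>{d. d dvd a \<and> d \<noteq> 1}. cyclo_factors d)"
    if "a \<in> A" for a
    using that A by (intro prime_factors_qint) (auto intro: gr0I)
  ultimately have "(\<Union>a\<in>A. prime_factors (qint a)) = (\<Union>d\<in>?D. cyclo_factors d)"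
    by (auto simp del: in_prime_factors_iff)
  then have "degLcmQ A = (\<Sum>p\<in>(\<Union>d\<in>?D. cyclo_factors d). degree p)"
    unfolding degLcmQ_def
    using degree_squarefree_eq_sum_prime_factors[OF Lcm_qint_nonzero squarefree_Lcm_qint, OF A A]
    by (simp add: prime_factors_Lcm_qint[OF A])
  also have "\<dots> = (\<Sum>d\<in>?D. \<Sum>p\<in>cyclo_factors d. degree p)"
  proof (rule sum.UNION_disjoint)
    show "\<forall>d\<in>?D. finite (cyclo_factors d)" by (auto intro: finite_cyclo_factors)
    show "\<forall>d\<in>?D. \<forall>e\<in>?D. d \<noteq> e \<longrightarrow> cyclo_factors d \<inter> cyclo_factors e = {}"
      using cyclo_factors_disjoint by blast
  qed simp
  also have "\<dots> = (\<Sum>d\<in>?D. totient d)"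
    by (rule sum.cong) (auto intro: sum_degree_cyclo_factors)
  finally show ?thesis .
qed

section \<open>The summatory totient function\<close>

definition zeta2 :: real where
  "zeta2 = pi\<^sup>2 / 6"

lemma inverse_squares_sums_zeta2: "(\<lambda>k. 1 / (real k + 1)\<^sup>2) sums zeta2"
  using inverse_squares_sums unfolding zeta2_def by (simp add: add.commute)

lemma sum_inverse_squares_shift: "(\<Sum>k=1..N. 1 / (real k)\<^sup>2) = (\<Sum>k<N. 1 / (real k + 1)\<^sup>2)"
proof -
  have "(\<Sum>k=1..N. 1 / (real k)\<^sup>2) = (\<Sum>k<N. 1 / (real (Suc k))\<^sup>2)"
    by (rule sum.reindex_bij_witness[of _ Suc "\<lambda>k. k - 1"]) auto
  then show ?thesis by (simp add: add.commute)
qed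

lemma sum_inverse_squares_le_zeta2: "(\<Sum>k=1..N. 1 / (real k)\<^sup>2) \<le> zeta2"
  unfolding sum_inverse_squares_shift
  using sum_le_suminf[of "\<lambda>k. 1 / (real k + 1)\<^sup>2" "{..<N}"] inverse_squares_sums_zeta2
  by (simp add: sums_iff)

lemma zeta2_tail_le:
  assumes "\<eta> > 0"
  shows "\<exists>N0. \<forall>N\<ge>N0. zeta2 - (\<Sum>k=1..N. 1 / (real k)\<^sup>2) \<le> \<eta>"
proof -
  have "(\<lambda>N. \<Sum>k=1..N. 1 / (real k)\<^sup>2) \<longlonglongrightarrow> zeta2"
    unfolding sum_inverse_squares_shift using inverse_squares_sums_zeta2 by (simp add: sums_def)
  then obtain N0 where "\<forall>N\<ge>N0. norm ((\<Sum>k=1..N. 1 / (real k)\<^sup>2) - zeta2) < \<eta>"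
    using assms unfolding LIMSEQ_iff by blast
  then show ?thesis by (intro exI[of _ N0]) auto
qed

lemma zeta2_ge_1: "1 \<le> zeta2"
  using sum_inverse_squares_le_zeta2[of 1] by simp

lemma zeta2_less_2: "zeta2 < 2"
proof -
  have "pi < 3.2" using pi_approx by simp
  then have "pi\<^sup>2 < 3.2\<^sup>2" by (intro power_strict_mono) auto
  moreover have "(3.2::real)\<^sup>2 < 12" by (simp add: power2_eq_square)
  ultimately have "pi\<^sup>2 < 12" by linarith
  then show ?thesis unfolding zeta2_def by simp
qed

lemma sum_inverse_squares_from_2_le: "(\<Sum>k=2..N. 1 / (real k)\<^sup>2) \<le> zeta2 - 1"
proof (cases "N = 0")
  case False
  then have "{1..N} = insert 1 {2..N}" by auto
  then show ?thesis using sum_inverse_squares_le_zeta2[of N] by simp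
qed (use zeta2_ge_1 in simp)

definition totient_sum :: "nat \<Rightarrow> nat" where
  "totient_sum N = (\<Sum>d=2..N. totient d)"

lemma totient_sum_le: "totient_sum N \<le> N * N"
proof -
  have "totient_sum N \<le> (\<Sum>d=2..N. N)" unfolding totient_sum_def
    by (intro sum_mono) (meson atLeastAtMost_iff le_trans totient_le)
  also have "\<dots> \<le> N * N" by simp
  finally show ?thesis .
qed

definition multiples :: "nat \<Rightarrow> nat \<Rightarrow> nat set" where
  "multiples n d = {m \<in> {1..n}. d dvd m}"

lemma card_multiples:
  assumes "d > 0"
  shows "card (multiples n d) = n div d"
proof -
  have "bij_betw (\<lambda>k. k * d) {1..n div d} (multiples n d)"
  proof (rule bij_betw_byWitness[where f' = "\<lambda>m. m div d"])
    show "(\<lambda>k. k * d) ` {1..n div d} \<subseteq> multiples n d"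
      using assms by (auto simp: multiples_def less_eq_div_iff_mult_less_eq)
    show "(\<lambda>m. m div d) ` multiples n d \<subseteq> {1..n div d}"
      using assms by (auto simp: multiples_def less_eq_div_iff_mult_less_eq mult.commute elim!: dvdE)
  qed (use assms in \<open>auto simp: multiples_def\<close>)
  then have "card {1..n div d} = card (multiples n d)" by (rule bij_betw_same_card)
  then show ?thesis by simp
qed

(* Both sides count the pairs (k, d) with 2 <= d and k * d <= N, weighted by totient d. *)
lemma sum_totient_sum_div: "(\<Sum>k=1..N. totient_sum (N div k)) = (\<Sum>m=1..N. m - 1)"
proof -
  have "(\<Sum>k=1..N. totient_sum (N div k)) = (\<Sum>k=1..N. \<Sum>d | d \<in> {2..N} \<and> d \<le> N div k. totient d)"
  proof (rule sum.cong)
    fix k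
    have "{2..N div k} = {d. d \<in> {2..N} \<and> d \<le> N div k}"
      by (auto intro: order.trans[OF _ div_le_dividend])
    then show "totient_sum (N div k) = (\<Sum>d | d \<in> {2..N} \<and> d \<le> N div k. totient d)"
      by (simp add: totient_sum_def)
  qed simp
  also have "\<dots> = (\<Sum>d=2..N. \<Sum>k | k \<in> {1..N} \<and> d \<le> N div k. totient d)"
    by (rule sum.swap_restrict) auto
  also have "\<dots> = (\<Sum>d=2..N. \<Sum>m\<in>multiples N d. totient d)"
  proof (rule sum.cong)
    fix d assume "d \<in> {2..N}"
    then have k_le: "k \<le> k * d" for k by simp
    have "{k. k \<in> {1..N} \<and> d \<le> N div k} = {1..N div d}"
      using \<open>d \<in> {2..N}\<close>
      by (auto simp: less_eq_div_iff_mult_less_eq mult.commute dest: order.trans[OF k_le])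
    then show "(\<Sum>k | k \<in> {1..N} \<and> d \<le> N div k. totient d) = (\<Sum>m\<in>multiples N d. totient d)"
      using \<open>d \<in> {2..N}\<close> by (simp add: card_multiples)
  qed simp
  also have "\<dots> = (\<Sum>m=1..N. \<Sum>d | d \<in> {2..N} \<and> d dvd m. totient d)"
    unfolding multiples_def by (rule sum.swap_restrict[symmetric]) auto
  also have "\<dots> = (\<Sum>m=1..N. m - 1)"
  proof (rule sum.cong)
    fix m assume m: "m \<in> {1..N}"
    then have "{d. d dvd m} = insert 1 {d. d \<in> {2..N} \<and> d dvd m}"
      by (auto dest: dvd_imp_le simp: Suc_le_eq intro: gr0I)
    moreover have "finite {d. d \<in> {2..N} \<and> d dvd m}" by simp
    ultimately show "(\<Sum>d | d \<in> {2..N} \<and> d dvd m. totient d) = m - 1"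
      using totient_divisor_sum[of m] by simp
  qed simp
  finally show ?thesis .
qed

definition totient_density :: real where
  "totient_density = 3 / pi\<^sup>2"

lemma totient_density_pos: "totient_density > 0"
  by (simp add: totient_density_def)

lemma totient_density_mult_zeta2: "totient_density * zeta2 = 1 / 2"
  by (simp add: totient_density_def zeta2_def)

definition totient_sum_error :: "nat \<Rightarrow> real" where
  "totient_sum_error N = real (totient_sum N) - totient_density * (real N)\<^sup>2"

lemma totient_sum_error_0 [simp]: "totient_sum_error 0 = 0"
  by (simp add: totient_sum_error_def totient_sum_def)

lemma abs_totient_sum_error_le: "\<bar>totient_sum_error N\<bar> \<le> (1 + totient_density) * (real N)\<^sup>2"
proof -
  have "real (totient_sum N) \<le> (real N)\<^sup>2"
    using totient_sum_le[of N] by (simp add: power2_eq_square) (metis of_nat_le_iff of_nat_mult)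
  moreover have "0 \<le> totient_density * (real N)\<^sup>2" using totient_density_pos by simp
  ultimately show ?thesis
    unfolding totient_sum_error_def abs_le_iff distrib_right by linarith
qed

lemma real_div_le_divide: "real (N div k) \<le> real N / real k"
  and real_divide_less_div_plus_1: "real N / real k < real (N div k) + 1"
  using floor_divide_of_nat_eq[of N k, where 'a = real]
    of_int_floor_le[of "real N / real k"] real_of_int_floor_add_one_gt[of "real N / real k"]
  by simp_all

lemma square_divide_minus_square_div:
  assumes "\<eta> > 0"
  shows "0 \<le> (real N / real k)\<^sup>2 - (real (N div k))\<^sup>2"
    and "(real N / real k)\<^sup>2 - (real (N div k))\<^sup>2 \<le> \<eta> * (real N / real k)\<^sup>2 + 1 / \<eta>"
proof -
  define x where "x = real N / real k"
  define y where "y = real (N div k)"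
  have xy: "0 \<le> y" "y \<le> x" "x < y + 1"
    using real_div_le_divide real_divide_less_div_plus_1 unfolding x_def y_def by auto
  then have "y\<^sup>2 \<le> x\<^sup>2" by (intro power_mono) auto
  then show "0 \<le> (real N / real k)\<^sup>2 - (real (N div k))\<^sup>2"
    unfolding x_def y_def by simp
  have "x\<^sup>2 - y\<^sup>2 = (x - y) * (x + y)" by (simp add: algebra_simps power2_eq_square)
  also have "\<dots> \<le> 1 * (2 * x)" using xy by (intro mult_mono) auto
  also have "\<dots> \<le> \<eta> * x\<^sup>2 + 1 / \<eta>"
  proof -
    have "0 \<le> (\<eta> * x - 1)\<^sup>2" by simp
    also have "(\<eta> * x - 1)\<^sup>2 = \<eta> * (\<eta> * x\<^sup>2 + 1 / \<eta> - 2 * x)"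
      using assms by (simp add: power2_eq_square algebra_simps)
    finally show ?thesis using assms by (simp add: zero_le_mult_iff)
  qed
  finally show "(real N / real k)\<^sup>2 - (real (N div k))\<^sup>2 \<le> \<eta> * (real N / real k)\<^sup>2 + 1 / \<eta>"
    unfolding x_def y_def .
qed

lemma real_sum_pred: "real (\<Sum>m=1..N. m - 1) = real N * (real N - 1) / 2"
  by (induction N) (simp_all add: algebra_simps add_divide_distrib of_nat_diff)

lemma sum_totient_sum_error_div:
  "(\<Sum>k=1..N. totient_sum_error (N div k))
     = totient_density * (real N)\<^sup>2 * (zeta2 - (\<Sum>k=1..N. 1 / (real k)\<^sup>2))
       + totient_density * (\<Sum>k=1..N. (real N / real k)\<^sup>2 - (real (N div k))\<^sup>2) - real N / 2"
    (is "?E = ?c * ?N2 * (zeta2 - ?S) + ?c * ?G - _")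
proof -
  let ?Q = "\<Sum>k=1..N. (real (N div k))\<^sup>2"
  have "(\<Sum>k=1..N. real (totient_sum (N div k))) = real N * (real N - 1) / 2"
    by (simp only: of_nat_sum[symmetric] sum_totient_sum_div real_sum_pred)
  then have "?E = real N * (real N - 1) / 2 - ?c * ?Q"
    unfolding totient_sum_error_def sum_subtractf sum_distrib_left by simp
  moreover have "?G = ?N2 * ?S - ?Q"
    by (simp add: sum_subtractf sum_distrib_left power_divide)
  then have "?c * ?G = ?c * ?N2 * ?S - ?c * ?Q"
    by (simp only: right_diff_distrib mult.assoc)
  moreover have "?c * ?N2 * zeta2 = ?N2 / 2"
    using totient_density_mult_zeta2 by (simp add: algebra_simps)
  moreover have "real N * (real N - 1) / 2 = ?N2 / 2 - real N / 2"
    by (simp add: algebra_simps power2_eq_square diff_divide_distrib)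
  moreover have "?c * ?N2 * (zeta2 - ?S) = ?c * ?N2 * zeta2 - ?c * ?N2 * ?S"
    by (simp add: right_diff_distrib)
  ultimately show ?thesis by linarith
qed

lemma totient_density_mult_square_gap_le:
  assumes "\<eta> > 0"
  shows "0 \<le> totient_density * (\<Sum>k=1..N. (real N / real k)\<^sup>2 - (real (N div k))\<^sup>2)"
    and "totient_density * (\<Sum>k=1..N. (real N / real k)\<^sup>2 - (real (N div k))\<^sup>2)
           \<le> \<eta> * (real N)\<^sup>2 / 2 + totient_density / \<eta> * real N"
proof -
  let ?c = totient_density
  let ?G = "\<Sum>k=1..N. (real N / real k)\<^sup>2 - (real (N div k))\<^sup>2"
  show "0 \<le> ?c * ?G"
    using square_divide_minus_square_div(1)[OF assms] totient_density_pos
    by (intro mult_nonneg_nonneg sum_nonneg) auto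
  have "?G \<le> (\<Sum>k=1..N. \<eta> * (real N / real k)\<^sup>2 + 1 / \<eta>)"
    using square_divide_minus_square_div(2)[OF assms] by (intro sum_mono)
  also have "\<dots> = \<eta> * (real N)\<^sup>2 * (\<Sum>k=1..N. 1 / (real k)\<^sup>2) + real N / \<eta>"
    by (simp add: sum.distrib sum_distrib_left power_divide)
  also have "\<dots> \<le> \<eta> * (real N)\<^sup>2 * zeta2 + real N / \<eta>"
    using sum_inverse_squares_le_zeta2 assms by (intro add_right_mono mult_left_mono) auto
  finally have "?c * ?G \<le> ?c * (\<eta> * (real N)\<^sup>2 * zeta2 + real N / \<eta>)"
    using totient_density_pos by (intro mult_left_mono) auto
  also have "\<dots> = \<eta> * (real N)\<^sup>2 / 2 + ?c / \<eta> * real N"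
    using totient_density_mult_zeta2 by (simp add: algebra_simps)
  finally show "?c * ?G \<le> \<eta> * (real N)\<^sup>2 / 2 + ?c / \<eta> * real N" .
qed

lemma totient_density_mult_zeta2_tail_le:
  assumes "\<eta> > 0"
  obtains K where "\<And>N. 0 \<le> totient_density * (real N)\<^sup>2 * (zeta2 - (\<Sum>k=1..N. 1 / (real k)\<^sup>2))"
    and "\<And>N. totient_density * (real N)\<^sup>2 * (zeta2 - (\<Sum>k=1..N. 1 / (real k)\<^sup>2))
               \<le> \<eta> * (real N)\<^sup>2 + K * real N"
proof -
  let ?c = totient_density
  let ?S = "\<lambda>N. \<Sum>k=1..N. 1 / (real k)\<^sup>2"
  obtain N0 where N0: "\<forall>N\<ge>N0. zeta2 - ?S N \<le> 2 * \<eta> * zeta2"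
    using zeta2_tail_le[of "2 * \<eta> * zeta2"] assms zeta2_ge_1 by auto
  have "0 \<le> ?c * (real N)\<^sup>2 * (zeta2 - ?S N)" for N
    using sum_inverse_squares_le_zeta2 totient_density_pos by simp
  moreover have "?c * (real N)\<^sup>2 * (zeta2 - ?S N) \<le> \<eta> * (real N)\<^sup>2 + real N0 / 2 * real N" for N
  proof (cases "N \<ge> N0")
    case True
    then have "?c * (real N)\<^sup>2 * (zeta2 - ?S N) \<le> ?c * (real N)\<^sup>2 * (2 * \<eta> * zeta2)"
      using N0 totient_density_pos by (intro mult_left_mono) auto
    also have "\<dots> = \<eta> * (real N)\<^sup>2"
      using totient_density_mult_zeta2 by (simp add: algebra_simps)
    finally show ?thesis by (simp add: add_increasing2)
  next
    case False
    have "?c * (real N)\<^sup>2 * (zeta2 - ?S N) \<le> ?c * (real N)\<^sup>2 * zeta2"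
      using totient_density_pos by (intro mult_left_mono) (auto intro!: sum_nonneg)
    also have "\<dots> = real N / 2 * real N"
      using totient_density_mult_zeta2 by (simp add: algebra_simps power2_eq_square)
    also have "\<dots> \<le> real N0 / 2 * real N"
      using False by (intro mult_right_mono) auto
    finally show ?thesis using assms by (simp add: add_increasing)
  qed
  ultimately show ?thesis by (rule that)
qed

lemma sum_totient_sum_error_div_small:
  assumes "\<eta> > 0"
  obtains K where "\<And>N. \<bar>\<Sum>k=1..N. totient_sum_error (N div k)\<bar> \<le> \<eta> * (real N)\<^sup>2 + K * real N"
proof -
  let ?c = totient_density
  obtain K where tail0: "\<And>N. 0 \<le> ?c * (real N)\<^sup>2 * (zeta2 - (\<Sum>k=1..N. 1 / (real k)\<^sup>2))"
    and tail: "\<And>N. ?c * (real N)\<^sup>2 * (zeta2 - (\<Sum>k=1..N. 1 / (real k)\<^sup>2)) \<le> \<eta> / 2 * (real N)\<^sup>2 + K * real N"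
    using totient_density_mult_zeta2_tail_le[of "\<eta> / 2"] assms by auto
  have "\<bar>\<Sum>k=1..N. totient_sum_error (N div k)\<bar> \<le> \<eta> * (real N)\<^sup>2 + (K + ?c / \<eta> + 1 / 2) * real N" for N
    using sum_totient_sum_error_div[of N] tail0[of N] tail[of N]
      totient_density_mult_square_gap_le[OF assms, of N]
    by (simp add: algebra_simps abs_le_iff)
  then show ?thesis by (rule that)
qed

definition totient_error_bound :: "real \<Rightarrow> bool" where
  "totient_error_bound t \<longleftrightarrow> (\<exists>C. \<forall>N. \<bar>totient_sum_error N\<bar> \<le> t * (real N)\<^sup>2 + C)"

lemma totient_error_bound_mono:
  assumes "totient_error_bound t" "t \<le> t'"
  shows "totient_error_bound t'"
proof -
  obtain C where "\<forall>N. \<bar>totient_sum_error N\<bar> \<le> t * (real N)\<^sup>2 + C"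
    using assms(1) unfolding totient_error_bound_def by blast
  moreover have "t * (real N)\<^sup>2 \<le> t' * (real N)\<^sup>2" for N
    using assms(2) by (intro mult_right_mono) auto
  ultimately show ?thesis unfolding totient_error_bound_def by (meson order.trans add_right_mono)
qed

lemma totient_error_bound_absorb_linear:
  assumes bound: "\<And>N. N \<ge> 1 \<Longrightarrow> \<bar>totient_sum_error N\<bar> \<le> t * (real N)\<^sup>2 + K * real N"
    and t: "t \<ge> 0" and \<eta>: "\<eta> > 0"
  shows "totient_error_bound (t + \<eta>)"
proof -
  define N1 :: nat where "N1 = nat \<lceil>K / \<eta>\<rceil>"
  have "\<bar>totient_sum_error N\<bar> \<le> (t + \<eta>) * (real N)\<^sup>2 + (1 + totient_density) * (real N1)\<^sup>2" for N
  proof (cases "N \<ge> N1 \<and> N \<ge> 1")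
    case True
    then have "K / \<eta> \<le> real N" unfolding N1_def by linarith
    then have "K \<le> \<eta> * real N" using \<eta> by (simp add: field_simps)
    then have "K * real N \<le> \<eta> * real N * real N" by (intro mult_right_mono) auto
    moreover have "0 \<le> (1 + totient_density) * (real N1)\<^sup>2" using totient_density_pos by simp
    ultimately show ?thesis
      using bound[of N] True unfolding distrib_right power2_eq_square by linarith
  next
    case False
    then have "(1 + totient_density) * (real N)\<^sup>2 \<le> (1 + totient_density) * (real N1)\<^sup>2"
      using totient_density_pos by (intro mult_left_mono power_mono) auto
    moreover have "0 \<le> (t + \<eta>) * (real N)\<^sup>2" using t \<eta> by simp
    ultimately show ?thesis
      using abs_totient_sum_error_le[of N] by linarith
  qed
  then show ?thesis unfolding totient_error_bound_def by blast
qed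

lemma abs_sum_totient_sum_error_div_from_2_le:
  assumes t: "t \<ge> 0" and C: "\<And>M. \<bar>totient_sum_error M\<bar> \<le> t * (real M)\<^sup>2 + C"
  shows "\<bar>\<Sum>k=2..N. totient_sum_error (N div k)\<bar> \<le> (zeta2 - 1) * t * (real N)\<^sup>2 + C * real N"
proof -
  have C0: "C \<ge> 0" using C[of 0] by simp
  have "\<bar>\<Sum>k=2..N. totient_sum_error (N div k)\<bar> \<le> (\<Sum>k=2..N. \<bar>totient_sum_error (N div k)\<bar>)"
    by (rule sum_abs)
  also have "\<dots> \<le> (\<Sum>k=2..N. t * (real N)\<^sup>2 * (1 / (real k)\<^sup>2) + C)"
  proof (rule sum_mono)
    fix k
    have "(real (N div k))\<^sup>2 \<le> (real N / real k)\<^sup>2"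
      using real_div_le_divide by (intro power_mono) auto
    then have "t * (real (N div k))\<^sup>2 \<le> t * (real N / real k)\<^sup>2"
      using t by (intro mult_left_mono)
    also have "\<dots> = t * (real N)\<^sup>2 * (1 / (real k)\<^sup>2)" by (simp add: power_divide)
    finally have "t * (real (N div k))\<^sup>2 \<le> t * (real N)\<^sup>2 * (1 / (real k)\<^sup>2)" .
    then show "\<bar>totient_sum_error (N div k)\<bar> \<le> t * (real N)\<^sup>2 * (1 / (real k)\<^sup>2) + C"
      using C[of "N div k"] by linarith
  qed
  also have "\<dots> = t * (real N)\<^sup>2 * (\<Sum>k=2..N. 1 / (real k)\<^sup>2) + C * real (N - 1)"
    by (simp add: sum.distrib sum_distrib_left)
  also have "\<dots> \<le> t * (real N)\<^sup>2 * (zeta2 - 1) + C * real N"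
    using sum_inverse_squares_from_2_le t C0 by (intro add_mono mult_left_mono) auto
  finally show ?thesis by (simp add: mult_ac)
qed

(* Bootstrap: the sum over all k of the errors at N div k is o(N^2), and the terms with k >= 2
   contribute at most (zeta2 - 1) t N^2, where zeta2 - 1 < 1. *)
lemma totient_error_bound_improve:
  assumes t: "t \<ge> 0" and \<eta>: "\<eta> > 0" and "totient_error_bound t"
  shows "totient_error_bound ((zeta2 - 1) * t + \<eta>)"
proof -
  obtain C where C: "\<And>N. \<bar>totient_sum_error N\<bar> \<le> t * (real N)\<^sup>2 + C"
    using assms(3) unfolding totient_error_bound_def by blast
  obtain K where K: "\<And>N. \<bar>\<Sum>k=1..N. totient_sum_error (N div k)\<bar> \<le> \<eta> / 2 * (real N)\<^sup>2 + K * real N"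
    using sum_totient_sum_error_div_small[of "\<eta> / 2"] \<eta> by auto
  have "\<bar>totient_sum_error N\<bar> \<le> ((zeta2 - 1) * t + \<eta> / 2) * (real N)\<^sup>2 + (K + C) * real N"
    if "N \<ge> 1" for N
  proof -
    have "{1..N} = insert 1 {2..N}" using that by auto
    then have "totient_sum_error N
        = (\<Sum>k=1..N. totient_sum_error (N div k)) - (\<Sum>k=2..N. totient_sum_error (N div k))"
      by simp
    then show ?thesis
      using K[of N] abs_sum_totient_sum_error_div_from_2_le[OF t C, of N]
      by (simp add: algebra_simps abs_le_iff) linarith
  qed
  then have "totient_error_bound (((zeta2 - 1) * t + \<eta> / 2) + \<eta> / 2)"
    using t \<eta> zeta2_ge_1 by (intro totient_error_bound_absorb_linear) auto
  then show ?thesis by (simp add: add.commute)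
qed

lemma totient_error_bound_iterate:
  assumes "\<eta> > 0"
  shows "totient_error_bound ((zeta2 - 1) ^ j * (1 + totient_density) + \<eta> / (2 - zeta2))"
proof (induction j)
  case 0
  have "totient_error_bound (1 + totient_density)"
    unfolding totient_error_bound_def
    by (intro exI[of _ 0] allI) (simp add: abs_totient_sum_error_le)
  then show ?case
    using assms zeta2_less_2 by (auto intro: totient_error_bound_mono)
next
  case (Suc j)
  let ?t = "(zeta2 - 1) ^ j * (1 + totient_density) + \<eta> / (2 - zeta2)"
  have "0 \<le> ?t" using assms zeta2_ge_1 zeta2_less_2 totient_density_pos by simp
  then have "totient_error_bound ((zeta2 - 1) * ?t + \<eta>)"
    using totient_error_bound_improve[OF _ assms Suc] by simp
  moreover have "(zeta2 - 1) * ?t + \<eta> = (zeta2 - 1) ^ Suc j * (1 + totient_density) + \<eta> / (2 - zeta2)"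
    using zeta2_less_2 by (simp add: field_simps)
  ultimately show ?case by simp
qed

lemma totient_error_bound_all:
  assumes "\<epsilon> > 0"
  shows "totient_error_bound \<epsilon>"
proof -
  let ?\<rho> = "zeta2 - 1"
  have \<rho>: "0 \<le> ?\<rho>" "?\<rho> < 1" using zeta2_ge_1 zeta2_less_2 by auto
  obtain j where "?\<rho> ^ j < \<epsilon> / 2 / (1 + totient_density)"
    using real_arch_pow_inv[of "\<epsilon> / 2 / (1 + totient_density)" ?\<rho>] assms \<rho> totient_density_pos
    by auto
  then have "?\<rho> ^ j * (1 + totient_density) < \<epsilon> / 2"
    using totient_density_pos by (simp add: field_simps)
  moreover have "totient_error_bound (?\<rho> ^ j * (1 + totient_density) + \<epsilon> / 2)"
  proof -
    have "\<epsilon> * (2 - zeta2) / 2 / (2 - zeta2) = \<epsilon> / 2"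
      using zeta2_less_2 by (simp add: field_simps)
    moreover have "\<epsilon> * (2 - zeta2) / 2 > 0" using assms zeta2_less_2 by simp
    ultimately show ?thesis using totient_error_bound_iterate by metis
  qed
  ultimately show ?thesis using totient_error_bound_mono by fastforce
qed

section \<open>The mean\<close>

definition Li2_quot :: "real \<Rightarrow> real" where
  "Li2_quot z = (\<Sum>k. z ^ k / (real k + 1)\<^sup>2)"

lemma summable_Li2_quot:
  assumes "\<bar>z\<bar> \<le> 1"
  shows "summable (\<lambda>k. z ^ k / (real k + 1)\<^sup>2)"
proof (rule summable_comparison_test)
  show "\<exists>N. \<forall>k\<ge>N. norm (z ^ k / (real k + 1)\<^sup>2) \<le> 1 / (real k + 1)\<^sup>2"
    using assms by (auto simp: abs_mult power_abs divide_right_mono power_le_one)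
  show "summable (\<lambda>k. 1 / (real k + 1)\<^sup>2)"
    using inverse_squares_sums_zeta2 by (rule sums_summable)
qed

lemma Li2_eq_mult_Li2_quot:
  assumes "\<bar>z\<bar> \<le> 1"
  shows "Li2 z = z * Li2_quot z"
proof -
  have "Li2 z = (\<Sum>k. z * (z ^ k / (real k + 1)\<^sup>2))"
    unfolding Li2_def by (simp add: add.commute)
  also have "\<dots> = z * Li2_quot z"
    unfolding Li2_quot_def using summable_Li2_quot[OF assms] by (rule suminf_mult)
  finally show ?thesis .
qed

lemma Li2_quot_0: "Li2_quot 0 = 1"
proof -
  have "(\<lambda>k. 1 / (real k + 1)\<^sup>2 * 0 ^ k) sums (1 / (real 0 + 1)\<^sup>2)"
    by (rule powser_sums_zero)
  then show ?thesis unfolding Li2_quot_def by (simp add: sums_iff mult.commute)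
qed

lemma fdens_eq_Li2_quot:
  assumes "0 < \<alpha>" "\<alpha> \<le> 1"
  shows "fdens \<alpha> = totient_density * \<alpha> * Li2_quot (1 - \<alpha>)"
  using assms Li2_eq_mult_Li2_quot[of "1 - \<alpha>"]
  by (auto simp: fdens_def totient_density_def Li2_quot_0)

lemma Li2_quot_tail:
  assumes "0 \<le> z" "z \<le> 1"
  shows "0 \<le> Li2_quot z - (\<Sum>k<n. z ^ k / (real k + 1)\<^sup>2)"
    and "Li2_quot z - (\<Sum>k<n. z ^ k / (real k + 1)\<^sup>2) \<le> zeta2 - (\<Sum>k=1..n. 1 / (real k)\<^sup>2)"
proof -
  define f where "f k = z ^ k / (real k + 1)\<^sup>2" for k
  define g where "g k = 1 / (real k + 1)\<^sup>2" for k
  have f: "summable f" and g: "summable g"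
    using summable_Li2_quot[of z] inverse_squares_sums_zeta2 assms
    unfolding f_def g_def by (auto intro: sums_summable)
  have "Li2_quot z - (\<Sum>k<n. f k) = (\<Sum>k. f (k + n))"
    using suminf_split_initial_segment[OF f, of n] unfolding Li2_quot_def f_def by simp
  moreover have "zeta2 - (\<Sum>k<n. g k) = (\<Sum>k. g (k + n))"
    using suminf_split_initial_segment[OF g, of n] inverse_squares_sums_zeta2
    unfolding g_def by (simp add: sums_iff)
  moreover have f': "summable (\<lambda>k. f (k + n))" and g': "summable (\<lambda>k. g (k + n))"
    using f g by (simp_all add: summable_iff_shift)
  moreover have "0 \<le> (\<Sum>k. f (k + n))"
    using f' assms by (intro suminf_nonneg) (auto simp: f_def)
  moreover have "(\<Sum>k. f (k + n)) \<le> (\<Sum>k. g (k + n))"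
    using f' g' assms
    by (intro suminf_le) (auto simp: f_def g_def divide_right_mono power_le_one)
  ultimately show "0 \<le> Li2_quot z - (\<Sum>k<n. z ^ k / (real k + 1)\<^sup>2)"
    and "Li2_quot z - (\<Sum>k<n. z ^ k / (real k + 1)\<^sup>2) \<le> zeta2 - (\<Sum>k=1..n. 1 / (real k)\<^sup>2)"
    unfolding f_def g_def sum_inverse_squares_shift by simp_all
qed

lemma Li2_quot_ge_1:
  assumes "0 \<le> z" "z \<le> 1"
  shows "1 \<le> Li2_quot z"
  using Li2_quot_tail(1)[OF assms, of 1] by simp

definition mean_degLcmQ :: "nat \<Rightarrow> real \<Rightarrow> real" where
  "mean_degLcmQ n \<alpha> = (\<Sum>d=2..n. real (totient d) * (1 - (1 - \<alpha>) ^ (n div d)))"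

lemma mean_degLcmQ_eq:
  "mean_degLcmQ n \<alpha> = \<alpha> * (\<Sum>j<n. (1 - \<alpha>) ^ j * real (totient_sum (n div (j + 1))))"
proof -
  define \<beta> where "\<beta> = 1 - \<alpha>"
  have "mean_degLcmQ n \<alpha> = \<alpha> * (\<Sum>d=2..n. \<Sum>j | j < n \<and> j < n div d. real (totient d) * \<beta> ^ j)"
  proof -
    have geom: "1 - \<beta> ^ (n div d) = \<alpha> * (\<Sum>j | j < n \<and> j < n div d. \<beta> ^ j)" for d
    proof -
      have "{j. j < n \<and> j < n div d} = {..<n div d}"
        by (auto intro: less_le_trans[OF _ div_le_dividend])
      then show ?thesis using one_diff_power_eq[of \<beta> "n div d"] by (simp add: \<beta>_def)
    qed
    show ?thesis
      unfolding mean_degLcmQ_def \<beta>_def[symmetric] sum_distrib_left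
      by (rule sum.cong) (simp_all add: geom sum_distrib_left algebra_simps)
  qed
  also have "\<dots> = \<alpha> * (\<Sum>j<n. \<Sum>d | d \<in> {2..n} \<and> j < n div d. real (totient d) * \<beta> ^ j)"
    by (subst sum.swap_restrict) auto
  also have "\<dots> = \<alpha> * (\<Sum>j<n. \<beta> ^ j * real (totient_sum (n div (j + 1))))"
  proof -
    have "{d. d \<in> {2..n} \<and> j < n div d} = {2..n div (j + 1)}" for j
    proof -
      have "j < n div d \<longleftrightarrow> d * (j + 1) \<le> n" if "d \<ge> 2" for d
        using that by (auto simp: less_eq_div_iff_mult_less_eq Suc_le_eq[symmetric] mult.commute)
      moreover have "d \<le> n div (j + 1) \<longleftrightarrow> d * (j + 1) \<le> n" for d
        by (simp add: less_eq_div_iff_mult_less_eq)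
      moreover have le_mult: "d \<le> d * (j + 1)" for d by simp
      ultimately show ?thesis by (auto simp del: One_nat_def dest: order.trans[OF le_mult])
    qed
    then show ?thesis
      unfolding totient_sum_def by (simp add: sum_distrib_left mult.commute)
  qed
  finally show ?thesis by (simp add: \<beta>_def)
qed

lemma totient_sum_div_approx:
  assumes C: "\<And>N. \<bar>totient_sum_error N\<bar> \<le> \<epsilon> * (real N)\<^sup>2 + C"
    and \<epsilon>: "\<epsilon> \<ge> 0" and \<eta>: "\<eta> > 0"
  shows "\<bar>real (totient_sum (n div k)) - totient_density * (real n / real k)\<^sup>2\<bar>
           \<le> (\<epsilon> + totient_density * \<eta>) * (real n / real k)\<^sup>2 + (C + totient_density / \<eta>)"
proof -
  let ?c = totient_density
  define x where "x = real n / real k"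
  define y where "y = real (n div k)"
  have gap: "0 \<le> x\<^sup>2 - y\<^sup>2" "x\<^sup>2 - y\<^sup>2 \<le> \<eta> * x\<^sup>2 + 1 / \<eta>"
    using square_divide_minus_square_div[OF \<eta>] unfolding x_def y_def by auto
  have "0 \<le> ?c * (x\<^sup>2 - y\<^sup>2)" using gap totient_density_pos by simp
  moreover have "real (totient_sum (n div k)) - ?c * x\<^sup>2 = totient_sum_error (n div k) - ?c * (x\<^sup>2 - y\<^sup>2)"
    unfolding totient_sum_error_def y_def by (simp add: algebra_simps)
  ultimately have "\<bar>real (totient_sum (n div k)) - ?c * x\<^sup>2\<bar> \<le> \<bar>totient_sum_error (n div k)\<bar> + ?c * (x\<^sup>2 - y\<^sup>2)"
    by linarith
  also have "\<dots> \<le> (\<epsilon> * y\<^sup>2 + C) + ?c * (\<eta> * x\<^sup>2 + 1 / \<eta>)"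
    using C[of "n div k"] gap totient_density_pos unfolding y_def
    by (intro add_mono mult_left_mono) auto
  also have "\<dots> \<le> (\<epsilon> * x\<^sup>2 + C) + ?c * (\<eta> * x\<^sup>2 + 1 / \<eta>)"
    using gap \<epsilon> by (simp add: mult_left_mono)
  also have "\<dots> = (\<epsilon> + ?c * \<eta>) * x\<^sup>2 + (C + ?c / \<eta>)"
    by (simp add: algebra_simps)
  finally show ?thesis unfolding x_def .
qed

lemma mean_degLcmQ_minus_fdens:
  assumes "0 < \<alpha>" "\<alpha> \<le> 1"
  shows "mean_degLcmQ n \<alpha> - fdens \<alpha> * (real n)\<^sup>2
    = \<alpha> * ((\<Sum>j<n. (1 - \<alpha>) ^ j * (real (totient_sum (n div (j + 1)))
                                      - totient_density * (real n / real (j + 1))\<^sup>2))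
           - totient_density * (real n)\<^sup>2
               * (Li2_quot (1 - \<alpha>) - (\<Sum>j<n. (1 - \<alpha>) ^ j / (real j + 1)\<^sup>2)))"
proof -
  have "(\<Sum>j<n. (1 - \<alpha>) ^ j * (totient_density * (real n / real (j + 1))\<^sup>2))
      = totient_density * (real n)\<^sup>2 * (\<Sum>j<n. (1 - \<alpha>) ^ j / (real j + 1)\<^sup>2)"
    by (simp add: sum_distrib_left power_divide algebra_simps)
  then show ?thesis
    unfolding mean_degLcmQ_eq fdens_eq_Li2_quot[OF assms]
    by (simp add: right_diff_distrib sum_subtractf algebra_simps)
qed

lemma sum_abs_totient_sum_div_approx_le:
  assumes C: "\<And>N. \<bar>totient_sum_error N\<bar> \<le> \<epsilon> * (real N)\<^sup>2 + C"
    and \<epsilon>: "\<epsilon> \<ge> 0" and \<eta>: "\<eta> > 0"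
  shows "(\<Sum>j<n. \<bar>real (totient_sum (n div (j + 1))) - totient_density * (real n / real (j + 1))\<^sup>2\<bar>)
           \<le> (\<epsilon> + totient_density * \<eta>) * zeta2 * (real n)\<^sup>2 + (C + totient_density / \<eta>) * real n"
proof -
  let ?A = "\<epsilon> + totient_density * \<eta>" and ?B = "C + totient_density / \<eta>"
  have "(\<Sum>j<n. \<bar>real (totient_sum (n div (j + 1))) - totient_density * (real n / real (j + 1))\<^sup>2\<bar>)
      \<le> (\<Sum>j<n. ?A * (real n / real (j + 1))\<^sup>2 + ?B)"
    using \<epsilon> by (intro sum_mono totient_sum_div_approx[OF C _ \<eta>]) simp
  also have "\<dots> = ?A * (real n)\<^sup>2 * (\<Sum>k=1..n. 1 / (real k)\<^sup>2) + ?B * real n"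
  proof -
    have "(real n / real (j + 1))\<^sup>2 = (real n)\<^sup>2 * (1 / (real j + 1)\<^sup>2)" for j
      by (simp add: power_divide)
    then show ?thesis
      by (simp only: sum.distrib sum_distrib_left sum_inverse_squares_shift mult.assoc)
        (simp add: algebra_simps)
  qed
  also have "\<dots> \<le> ?A * (real n)\<^sup>2 * zeta2 + ?B * real n"
    using sum_inverse_squares_le_zeta2 \<epsilon> \<eta> totient_density_pos
    by (intro add_right_mono mult_left_mono) auto
  finally show ?thesis by (simp only: mult_ac)
qed

lemma abs_mean_degLcmQ_minus_fdens_le:
  assumes \<alpha>: "0 < \<alpha>" "\<alpha> \<le> 1"
  shows "\<bar>mean_degLcmQ n \<alpha> - fdens \<alpha> * (real n)\<^sup>2\<bar>
    \<le> \<alpha> * ((\<Sum>j<n. \<bar>real (totient_sum (n div (j + 1))) - totient_density * (real n / real (j + 1))\<^sup>2\<bar>)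
           + totient_density * (real n)\<^sup>2
               * (Li2_quot (1 - \<alpha>) - (\<Sum>j<n. (1 - \<alpha>) ^ j / (real j + 1)\<^sup>2)))"
proof -
  define a where "a j = real (totient_sum (n div (j + 1))) - totient_density * (real n / real (j + 1))\<^sup>2" for j
  define tail where "tail = Li2_quot (1 - \<alpha>) - (\<Sum>j<n. (1 - \<alpha>) ^ j / (real j + 1)\<^sup>2)"
  have "0 \<le> totient_density * (real n)\<^sup>2 * tail"
    using Li2_quot_tail(1)[of "1 - \<alpha>"] \<alpha> totient_density_pos unfolding tail_def by simp
  moreover have "\<bar>\<Sum>j<n. (1 - \<alpha>) ^ j * a j\<bar> \<le> (\<Sum>j<n. \<bar>a j\<bar>)"
    using \<alpha> by (intro order.trans[OF sum_abs] sum_mono)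
      (auto simp: abs_mult power_le_one mult_left_le_one_le)
  ultimately have "\<bar>(\<Sum>j<n. (1 - \<alpha>) ^ j * a j) - totient_density * (real n)\<^sup>2 * tail\<bar>
      \<le> (\<Sum>j<n. \<bar>a j\<bar>) + totient_density * (real n)\<^sup>2 * tail"
    by linarith
  then show ?thesis
    using \<alpha> unfolding mean_degLcmQ_minus_fdens[OF \<alpha>] a_def[symmetric] tail_def[symmetric]
    by (simp add: abs_mult mult_left_mono)
qed

lemma fdens_ge:
  assumes "0 < \<alpha>" "\<alpha> \<le> 1"
  shows "totient_density * \<alpha> \<le> fdens \<alpha>"
proof -
  have "totient_density * \<alpha> * 1 \<le> totient_density * \<alpha> * Li2_quot (1 - \<alpha>)"
    using Li2_quot_ge_1[of "1 - \<alpha>"] assms totient_density_pos by (intro mult_left_mono) auto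
  then show ?thesis by (simp add: fdens_eq_Li2_quot[OF assms])
qed

theorem mean_degLcmQ_asymptotic:
  assumes \<theta>: "\<theta> > 0"
  obtains N1 where "\<And>n \<alpha>. n \<ge> N1 \<Longrightarrow> 0 < \<alpha> \<Longrightarrow> \<alpha> \<le> 1 \<Longrightarrow>
           \<bar>mean_degLcmQ n \<alpha> - fdens \<alpha> * (real n)\<^sup>2\<bar> \<le> \<theta> * fdens \<alpha> * (real n)\<^sup>2"
proof -
  let ?c = totient_density
  define \<epsilon> where "\<epsilon> = \<theta> * ?c / (6 * zeta2)"
  define \<eta> where "\<eta> = \<theta> / (6 * zeta2)"
  have \<epsilon>: "\<epsilon> > 0" and \<eta>: "\<eta> > 0"
    using \<theta> totient_density_pos zeta2_ge_1 by (auto simp: \<epsilon>_def \<eta>_def)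
  have \<epsilon>\<eta>: "(\<epsilon> + ?c * \<eta>) * zeta2 = \<theta> * ?c / 3"
    using zeta2_ge_1 by (simp add: \<epsilon>_def \<eta>_def field_simps)
  obtain C where C: "\<And>N. \<bar>totient_sum_error N\<bar> \<le> \<epsilon> * (real N)\<^sup>2 + C"
    using totient_error_bound_all[OF \<epsilon>] unfolding totient_error_bound_def by blast
  obtain N0 where N0: "\<forall>N\<ge>N0. zeta2 - (\<Sum>k=1..N. 1 / (real k)\<^sup>2) \<le> \<theta> / 3"
    using zeta2_tail_le[of "\<theta> / 3"] \<theta> by auto
  define N1 where "N1 = max N0 (nat \<lceil>3 * (C + ?c / \<eta>) / (\<theta> * ?c)\<rceil>)"
  have "\<bar>mean_degLcmQ n \<alpha> - fdens \<alpha> * (real n)\<^sup>2\<bar> \<le> \<theta> * fdens \<alpha> * (real n)\<^sup>2"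
    if n: "n \<ge> N1" and \<alpha>: "0 < \<alpha>" "\<alpha> \<le> 1" for n \<alpha>
  proof -
    have "3 * (C + ?c / \<eta>) / (\<theta> * ?c) \<le> real n" using n unfolding N1_def by linarith
    then have "C + ?c / \<eta> \<le> \<theta> * ?c / 3 * real n"
      using \<theta> totient_density_pos by (simp add: field_simps)
    then have "(C + ?c / \<eta>) * real n \<le> \<theta> * ?c / 3 * real n * real n"
      by (intro mult_right_mono) auto
    then have linear: "(C + ?c / \<eta>) * real n \<le> \<theta> * ?c / 3 * (real n)\<^sup>2"
      by (simp add: power2_eq_square)
    define q where "q = \<theta> * ?c / 3 * (real n)\<^sup>2"
    have "(\<Sum>j<n. \<bar>real (totient_sum (n div (j + 1))) - ?c * (real n / real (j + 1))\<^sup>2\<bar>) \<le> q + q"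
      using sum_abs_totient_sum_div_approx_le[OF C _ \<eta>, of n] \<epsilon> linear
      unfolding \<epsilon>\<eta> q_def by linarith
    moreover have "?c * (real n)\<^sup>2 * (Li2_quot (1 - \<alpha>) - (\<Sum>j<n. (1 - \<alpha>) ^ j / (real j + 1)\<^sup>2))
        \<le> ?c * (real n)\<^sup>2 * (\<theta> / 3)"
      using Li2_quot_tail(2)[of "1 - \<alpha>" n] N0 n \<alpha> totient_density_pos unfolding N1_def
      by (intro mult_left_mono) force+
    moreover have "?c * (real n)\<^sup>2 * (\<theta> / 3) = q" by (simp add: q_def)
    ultimately have "\<bar>mean_degLcmQ n \<alpha> - fdens \<alpha> * (real n)\<^sup>2\<bar> \<le> \<alpha> * (q + q + q)"
      using \<alpha> by (intro order.trans[OF abs_mean_degLcmQ_minus_fdens_le[OF \<alpha>]] mult_left_mono) auto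
    also have "\<dots> = \<theta> * (?c * \<alpha>) * (real n)\<^sup>2" by (simp add: q_def algebra_simps)
    also have "\<dots> \<le> \<theta> * fdens \<alpha> * (real n)\<^sup>2"
      using fdens_ge[OF \<alpha>] \<theta> by (intro mult_right_mono mult_left_mono) auto
    finally show ?thesis .
  qed
  then show ?thesis by (rule that)
qed

section \<open>Concentration\<close>

definition expB :: "nat \<Rightarrow> real \<Rightarrow> (nat set \<Rightarrow> real) \<Rightarrow> real" where
  "expB n \<alpha> g = (\<Sum>A\<in>Pow {1..n}. \<alpha> ^ card A * (1 - \<alpha>) ^ (n - card A) * g A)"

lemma probB_eq_expB: "probB n \<alpha> P = expB n \<alpha> (\<lambda>A. of_bool (P A))"
  unfolding probB_def expB_def by (intro sum.cong) auto

lemma expB_add: "expB n \<alpha> (\<lambda>A. f A + g A) = expB n \<alpha> f + expB n \<alpha> g"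
  unfolding expB_def by (simp add: algebra_simps sum.distrib)

lemma expB_cmult: "expB n \<alpha> (\<lambda>A. c * f A) = c * expB n \<alpha> f"
  unfolding expB_def by (simp add: sum_distrib_left algebra_simps)

lemma expB_sum: "expB n \<alpha> (\<lambda>A. \<Sum>i\<in>I. f i A) = (\<Sum>i\<in>I. expB n \<alpha> (f i))"
  unfolding expB_def sum_distrib_left by (rule sum.swap)

lemma expB_mono:
  assumes "0 \<le> \<alpha>" "\<alpha> \<le> 1" "\<And>A. A \<subseteq> {1..n} \<Longrightarrow> f A \<le> g A"
  shows "expB n \<alpha> f \<le> expB n \<alpha> g"
  unfolding expB_def using assms by (intro sum_mono mult_left_mono) auto

lemma sum_Pow_power_card:
  fixes x y :: "'a :: comm_semiring_1"
  assumes "finite V"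
  shows "(\<Sum>A\<in>Pow V. x ^ card A * y ^ (card V - card A)) = (x + y) ^ card V"
proof -
  have "(x + y) ^ card V = (\<Sum>A\<in>Pow V. (\<Prod>_\<in>A. x) * (\<Prod>_\<in>V - A. y))"
    using prod_add[OF assms, of "\<lambda>_. x" "\<lambda>_. y"] by simp
  also have "\<dots> = (\<Sum>A\<in>Pow V. x ^ card A * y ^ (card V - card A))"
    using assms by (intro sum.cong) (auto simp: card_Diff_subset finite_subset)
  finally show ?thesis ..
qed

lemma expB_avoid:
  assumes "S \<subseteq> {1..n}"
  shows "expB n \<alpha> (\<lambda>A. of_bool (A \<inter> S = {})) = (1 - \<alpha>) ^ card S"
proof -
  let ?U = "{1..n} - S"
  have cS: "card S \<le> n" and cU: "card ?U = n - card S"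
    using assms card_mono[OF _ assms] by (auto simp: card_Diff_subset finite_subset)
  have "expB n \<alpha> (\<lambda>A. of_bool (A \<inter> S = {}))
      = (\<Sum>A\<in>Pow {1..n}. if A \<inter> S = {} then \<alpha> ^ card A * (1 - \<alpha>) ^ (n - card A) else 0)"
    unfolding expB_def by (intro sum.cong) auto
  also have "\<dots> = (\<Sum>A | A \<in> Pow {1..n} \<and> A \<inter> S = {}. \<alpha> ^ card A * (1 - \<alpha>) ^ (n - card A))"
    by (rule sum.inter_filter[symmetric]) simp
  also have "\<dots> = (\<Sum>A\<in>Pow ?U. \<alpha> ^ card A * (1 - \<alpha>) ^ (n - card A))"
    by (rule arg_cong2[where f = sum]) auto
  also have "\<dots> = (\<Sum>A\<in>Pow ?U. \<alpha> ^ card A * (1 - \<alpha>) ^ (card ?U - card A)) * (1 - \<alpha>) ^ card S"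
    unfolding sum_distrib_right
  proof (rule sum.cong)
    fix A assume "A \<in> Pow ?U"
    then have "card A \<le> card ?U" by (simp add: card_mono)
    then have "n - card A = (card ?U - card A) + card S" using cU cS by simp
    then show "\<alpha> ^ card A * (1 - \<alpha>) ^ (n - card A)
        = \<alpha> ^ card A * (1 - \<alpha>) ^ (card ?U - card A) * (1 - \<alpha>) ^ card S"
      by (simp add: power_add mult.assoc)
  qed simp
  also have "\<dots> = (1 - \<alpha>) ^ card S"
    by (subst sum_Pow_power_card) simp_all
  finally show ?thesis .
qed

lemma expB_const: "expB n \<alpha> (\<lambda>A. c) = c"
  using expB_avoid[of "{}" n \<alpha>] expB_cmult[of n \<alpha> c "\<lambda>A. 1"] by simp

lemma chebyshev_probB:
  assumes "0 \<le> \<alpha>" "\<alpha> \<le> 1" "t > 0"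
    and "\<And>A. A \<subseteq> {1..n} \<Longrightarrow> P A \<Longrightarrow> t < \<bar>g A\<bar>"
  shows "probB n \<alpha> P \<le> expB n \<alpha> (\<lambda>A. (g A)\<^sup>2) / t\<^sup>2"
proof -
  have "probB n \<alpha> P \<le> expB n \<alpha> (\<lambda>A. (g A)\<^sup>2 / t\<^sup>2)"
    unfolding probB_eq_expB
  proof (rule expB_mono)
    fix A assume "A \<subseteq> {1..n}"
    then have "P A \<Longrightarrow> t\<^sup>2 \<le> (g A)\<^sup>2"
      using assms(3,4) by (metis abs_le_square_iff less_imp_le abs_of_pos)
    then show "of_bool (P A) \<le> (g A)\<^sup>2 / t\<^sup>2" using assms(3) by auto
  qed (use assms in auto)
  also have "\<dots> = expB n \<alpha> (\<lambda>A. (g A)\<^sup>2) / t\<^sup>2"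
    using expB_cmult[of n \<alpha> "1 / t\<^sup>2" "\<lambda>A. (g A)\<^sup>2"] by simp
  finally show ?thesis .
qed

definition missed_totient :: "nat \<Rightarrow> nat set \<Rightarrow> real" where
  "missed_totient n A = (\<Sum>d=2..n. real (totient d) * of_bool (A \<inter> multiples n d = {}))"

lemma multiples_subset: "multiples n d \<subseteq> {1..n}"
  by (auto simp: multiples_def)

lemma degLcmQ_eq_totient_sum_minus_missed:
  assumes "A \<subseteq> {1..n}"
  shows "real (degLcmQ A) = real (totient_sum n) - missed_totient n A"
proof -
  have "(\<exists>a\<in>A. d dvd a) \<longleftrightarrow> A \<inter> multiples n d \<noteq> {}" for d
    using assms unfolding multiples_def by blast
  then have "(\<Sum>d=2..n. if \<exists>a\<in>A. d dvd a then real (totient d) else 0)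
      = (\<Sum>d=2..n. real (totient d) * (1 - of_bool (A \<inter> multiples n d = {})))"
    by (intro sum.cong) auto
  moreover have "real (degLcmQ A) = (\<Sum>d=2..n. if \<exists>a\<in>A. d dvd a then real (totient d) else 0)"
    unfolding degLcmQ_eq_sum_totient[OF assms] of_nat_sum by (rule sum.inter_filter) simp
  ultimately show ?thesis
    unfolding missed_totient_def totient_sum_def by (simp add: sum_subtractf algebra_simps)
qed

lemma expB_missed_totient:
  "expB n \<alpha> (missed_totient n) = (\<Sum>d=2..n. real (totient d) * (1 - \<alpha>) ^ (n div d))"
  unfolding missed_totient_def expB_sum expB_cmult
  by (intro sum.cong refl) (simp add: expB_avoid[OF multiples_subset] card_multiples)

lemma mean_degLcmQ_eq_totient_sum_minus_expB:
  "mean_degLcmQ n \<alpha> = real (totient_sum n) - expB n \<alpha> (missed_totient n)"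
  unfolding expB_missed_totient mean_degLcmQ_def totient_sum_def
  by (simp add: sum_subtractf algebra_simps)

lemma expB_missed_totient_sq:
  "expB n \<alpha> (\<lambda>A. (missed_totient n A)\<^sup>2) = (\<Sum>d=2..n. \<Sum>e=2..n.
     real (totient d) * real (totient e) * (1 - \<alpha>) ^ card (multiples n d \<union> multiples n e))"
proof -
  have "(missed_totient n A)\<^sup>2 = (\<Sum>d=2..n. \<Sum>e=2..n. real (totient d) * real (totient e)
          * of_bool (A \<inter> (multiples n d \<union> multiples n e) = {}))" for A
    unfolding missed_totient_def power2_eq_square sum_product by (intro sum.cong refl) auto
  then show ?thesis
    using multiples_subset
    by (simp add: expB_sum expB_cmult expB_avoid mult.assoc del: Un_iff)
qed

lemma power_minus_power_add_le:
  fixes \<beta> :: real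
  assumes "0 \<le> \<beta>" "\<beta> \<le> 1"
  shows "\<beta> ^ u - \<beta> ^ (u + c) \<le> (1 - \<beta>) * real c"
proof -
  have "\<beta> ^ u - \<beta> ^ (u + c) = \<beta> ^ u * (1 - \<beta> ^ c)" by (simp add: power_add algebra_simps)
  also have "\<dots> \<le> 1 - \<beta> ^ c" using assms by (intro mult_left_le_one_le) (auto simp: power_le_one)
  also have "1 - \<beta> ^ c = (1 - \<beta>) * (\<Sum>i<c. \<beta> ^ i)" by (rule one_diff_power_eq)
  also have "\<dots> \<le> (1 - \<beta>) * (\<Sum>i<c. 1)"
    using assms by (intro mult_left_mono sum_mono) (auto simp: power_le_one)
  finally show ?thesis by simp
qed

lemma sum_totient_card_multiples_Int_le:
  "(\<Sum>d=2..n. \<Sum>e=2..n. real (totient d) * real (totient e) * real (card (multiples n d \<inter> multiples n e)))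
     \<le> real n ^ 3"
proof -
  define g where "g m = (\<Sum>d=2..n. real (totient d) * of_bool (d dvd m))" for m
  have g: "0 \<le> g m" "g m \<le> real m" if "m \<ge> 1" for m
  proof -
    show "0 \<le> g m" unfolding g_def by (intro sum_nonneg) auto
    have "g m = (\<Sum>d=2..n. if d dvd m then real (totient d) else 0)"
      unfolding g_def by (intro sum.cong) auto
    also have "\<dots> = (\<Sum>d | d \<in> {2..n} \<and> d dvd m. real (totient d))"
      by (rule sum.inter_filter[symmetric]) simp
    also have "\<dots> \<le> (\<Sum>d | d dvd m. real (totient d))"
      using that by (intro sum_mono2) auto
    also have "\<dots> = real m" using totient_divisor_sum[of m] by (metis of_nat_sum)
    finally show "g m \<le> real m" .
  qed
  have card_multiples_Int: "real (card (multiples n d \<inter> multiples n e))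
      = (\<Sum>m=1..n. of_bool (d dvd m) * of_bool (e dvd m))" for d e
  proof -
    have "multiples n d \<inter> multiples n e = {m \<in> {1..n}. d dvd m \<and> e dvd m}"
      by (auto simp: multiples_def)
    then have "card (multiples n d \<inter> multiples n e) = (\<Sum>m=1..n. if d dvd m \<and> e dvd m then 1 else 0)"
      by (simp add: sum.inter_filter[symmetric])
    then show ?thesis
      by (simp only: of_nat_sum) (rule sum.cong, simp_all)
  qed
  have "(\<Sum>d=2..n. \<Sum>e=2..n. real (totient d) * real (totient e) * real (card (multiples n d \<inter> multiples n e)))
      = (\<Sum>d=2..n. \<Sum>e=2..n. \<Sum>m=1..n. (real (totient d) * of_bool (d dvd m)) * (real (totient e) * of_bool (e dvd m)))"
    by (intro sum.cong refl) (simp only: card_multiples_Int sum_distrib_left mult_ac)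
  also have "\<dots> = (\<Sum>m=1..n. (g m)\<^sup>2)"
    unfolding g_def power2_eq_square sum_product by (subst sum.swap) (rule sum.swap)
  also have "\<dots> \<le> (\<Sum>m=1..n. (real n)\<^sup>2)"
  proof (intro sum_mono power_mono)
    fix m assume "m \<in> {1..n}"
    then show "0 \<le> g m" "g m \<le> real n" using g[of m] by auto
  qed
  also have "\<dots> = real n ^ 3" by (simp add: power2_eq_square power3_eq_cube)
  finally show ?thesis .
qed

lemma variance_missed_totient_le:
  assumes "0 \<le> \<alpha>" "\<alpha> \<le> 1"
  shows "expB n \<alpha> (\<lambda>A. (missed_totient n A - expB n \<alpha> (missed_totient n))\<^sup>2) \<le> \<alpha> * real n ^ 3"
proof -
  define \<mu> where "\<mu> = expB n \<alpha> (missed_totient n)"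
  define \<beta> where "\<beta> = 1 - \<alpha>"
  define M where "M = multiples n"
  have \<beta>: "0 \<le> \<beta>" "\<beta> \<le> 1" using assms by (auto simp: \<beta>_def)
  have "expB n \<alpha> (\<lambda>A. (missed_totient n A - \<mu>)\<^sup>2)
      = expB n \<alpha> (\<lambda>A. (missed_totient n A)\<^sup>2 + ((-2 * \<mu>) * missed_totient n A + \<mu>\<^sup>2))"
    by (simp add: power2_eq_square algebra_simps)
  also have "\<dots> = expB n \<alpha> (\<lambda>A. (missed_totient n A)\<^sup>2) - \<mu>\<^sup>2"
    unfolding expB_add expB_cmult expB_const \<mu>_def[symmetric] by (simp add: power2_eq_square)
  also have "\<mu>\<^sup>2 = (\<Sum>d=2..n. \<Sum>e=2..n. real (totient d) * real (totient e) * \<beta> ^ (card (M d) + card (M e)))"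
    unfolding \<mu>_def expB_missed_totient power2_eq_square sum_product M_def \<beta>_def
    by (intro sum.cong refl) (simp add: card_multiples power_add)
  also have "expB n \<alpha> (\<lambda>A. (missed_totient n A)\<^sup>2) - \<dots>
      = (\<Sum>d=2..n. \<Sum>e=2..n. real (totient d) * real (totient e)
           * (\<beta> ^ card (M d \<union> M e) - \<beta> ^ (card (M d) + card (M e))))"
    unfolding expB_missed_totient_sq M_def \<beta>_def by (simp add: sum_subtractf algebra_simps)
  also have "\<dots> \<le> (\<Sum>d=2..n. \<Sum>e=2..n. real (totient d) * real (totient e) * (\<alpha> * real (card (M d \<inter> M e))))"
  proof (intro sum_mono mult_left_mono)
    fix d e
    have "card (M d) + card (M e) = card (M d \<union> M e) + card (M d \<inter> M e)"
      by (rule card_Un_Int) (auto simp: M_def multiples_def)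
    then show "\<beta> ^ card (M d \<union> M e) - \<beta> ^ (card (M d) + card (M e)) \<le> \<alpha> * real (card (M d \<inter> M e))"
      using power_minus_power_add_le[OF \<beta>, of "card (M d \<union> M e)" "card (M d \<inter> M e)"]
      by (simp add: \<beta>_def)
  qed simp
  also have "\<dots> = \<alpha> * (\<Sum>d=2..n. \<Sum>e=2..n.
      real (totient d) * real (totient e) * real (card (M d \<inter> M e)))"
    by (simp add: sum_distrib_left algebra_simps)
  also have "\<dots> \<le> \<alpha> * real n ^ 3"
    using sum_totient_card_multiples_Int_le assms unfolding M_def by (intro mult_left_mono) auto
  finally show ?thesis unfolding \<mu>_def .
qed

lemma probB_degLcmQ_deviation_le:
  assumes "0 \<le> \<alpha>" "\<alpha> \<le> 1" "t > 0"
  shows "probB n \<alpha> (\<lambda>A. \<bar>real (degLcmQ A) - mean_degLcmQ n \<alpha>\<bar> > t) \<le> \<alpha> * real n ^ 3 / t\<^sup>2"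
proof -
  let ?Y = "missed_totient n"
  have "real (degLcmQ A) - mean_degLcmQ n \<alpha> = expB n \<alpha> ?Y - ?Y A" if "A \<subseteq> {1..n}" for A
    using degLcmQ_eq_totient_sum_minus_missed[OF that] mean_degLcmQ_eq_totient_sum_minus_expB by simp
  then have "probB n \<alpha> (\<lambda>A. \<bar>real (degLcmQ A) - mean_degLcmQ n \<alpha>\<bar> > t)
      \<le> expB n \<alpha> (\<lambda>A. (?Y A - expB n \<alpha> ?Y)\<^sup>2) / t\<^sup>2"
    using assms by (intro chebyshev_probB) (auto simp: abs_minus_commute)
  also have "\<dots> \<le> \<alpha> * real n ^ 3 / t\<^sup>2"
    using variance_missed_totient_le[OF assms(1,2)] by (intro divide_right_mono) auto
  finally show ?thesis .
qed

lemma probB_far_from_fdens_le: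
  assumes \<alpha>: "0 < \<alpha>" "\<alpha> \<le> 1" and "n > 0" "\<epsilon> > 0"
    and mean: "\<bar>mean_degLcmQ n \<alpha> - fdens \<alpha> * (real n)\<^sup>2\<bar> \<le> \<epsilon> / 2 * fdens \<alpha> * (real n)\<^sup>2"
  shows "probB n \<alpha> (\<lambda>A. \<bar>real (degLcmQ A) - fdens \<alpha> * (real n)\<^sup>2\<bar> > \<epsilon> * fdens \<alpha> * (real n)\<^sup>2)
           \<le> 4 / (\<epsilon>\<^sup>2 * totient_density\<^sup>2 * (\<alpha> * real n))"
proof -
  define t where "t = \<epsilon> / 2 * fdens \<alpha> * (real n)\<^sup>2"
  define t0 where "t0 = \<epsilon> / 2 * (totient_density * \<alpha>) * (real n)\<^sup>2"
  have t0: "0 < t0" "t0 \<le> t"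
    unfolding t_def t0_def using assms totient_density_pos fdens_ge[OF \<alpha>]
    by (auto intro!: mult_right_mono mult_left_mono)
  have "probB n \<alpha> (\<lambda>A. \<bar>real (degLcmQ A) - fdens \<alpha> * (real n)\<^sup>2\<bar> > \<epsilon> * fdens \<alpha> * (real n)\<^sup>2)
      \<le> probB n \<alpha> (\<lambda>A. \<bar>real (degLcmQ A) - mean_degLcmQ n \<alpha>\<bar> > t)"
    unfolding probB_eq_expB
  proof (intro expB_mono)
    fix A
    have "\<bar>real (degLcmQ A) - fdens \<alpha> * (real n)\<^sup>2\<bar>
        \<le> \<bar>real (degLcmQ A) - mean_degLcmQ n \<alpha>\<bar> + \<bar>mean_degLcmQ n \<alpha> - fdens \<alpha> * (real n)\<^sup>2\<bar>"
      using abs_triangle_ineq[of "real (degLcmQ A) - mean_degLcmQ n \<alpha>"] by simp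
    then show "of_bool (\<bar>real (degLcmQ A) - fdens \<alpha> * (real n)\<^sup>2\<bar> > \<epsilon> * fdens \<alpha> * (real n)\<^sup>2)
        \<le> (of_bool (\<bar>real (degLcmQ A) - mean_degLcmQ n \<alpha>\<bar> > t) :: real)"
      using mean unfolding t_def by auto
  qed (use \<alpha> in auto)
  also have "\<dots> \<le> \<alpha> * real n ^ 3 / t\<^sup>2"
    using probB_degLcmQ_deviation_le t0 \<alpha> by simp
  also have "\<dots> \<le> \<alpha> * real n ^ 3 / t0\<^sup>2"
    using t0 \<alpha> by (intro divide_left_mono power_mono mult_pos_pos) auto
  also have "\<dots> = 4 / (\<epsilon>\<^sup>2 * totient_density\<^sup>2 * (\<alpha> * real n))"
    unfolding t0_def using assms totient_density_pos
    by (simp add: field_simps power2_eq_square power3_eq_cube)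
  finally show ?thesis .
qed

theorem theorem1p4:
  fixes \<epsilon> \<delta> :: real
  assumes "\<epsilon> > 0" and "\<delta> > 0"
  shows "\<exists>M>0. \<forall>(n::nat) (\<alpha>::real). n > 0 \<longrightarrow> 0 < \<alpha> \<longrightarrow> \<alpha> \<le> 1 \<longrightarrow> \<alpha> * real n \<ge> M \<longrightarrow>
           probB n \<alpha> (\<lambda>A. \<bar>real (degLcmQ A) - fdens \<alpha> * (real n)\<^sup>2\<bar> > \<epsilon> * fdens \<alpha> * (real n)\<^sup>2) \<le> \<delta>"
proof -
  let ?K = "4 / (\<epsilon>\<^sup>2 * totient_density\<^sup>2)"
  obtain N1 where N1: "\<And>n \<alpha>. n \<ge> N1 \<Longrightarrow> 0 < \<alpha> \<Longrightarrow> \<alpha> \<le> 1 \<Longrightarrow>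
      \<bar>mean_degLcmQ n \<alpha> - fdens \<alpha> * (real n)\<^sup>2\<bar> \<le> \<epsilon> / 2 * fdens \<alpha> * (real n)\<^sup>2"
    using mean_degLcmQ_asymptotic[of "\<epsilon> / 2"] assms by (metis half_gt_zero)
  define M where "M = max (real N1) (?K / \<delta>)"
  have "probB n \<alpha> (\<lambda>A. \<bar>real (degLcmQ A) - fdens \<alpha> * (real n)\<^sup>2\<bar> > \<epsilon> * fdens \<alpha> * (real n)\<^sup>2) \<le> \<delta>"
    if "n > 0" "0 < \<alpha>" "\<alpha> \<le> 1" "\<alpha> * real n \<ge> M" for n \<alpha>
  proof -
    have "real N1 \<le> real n"
      using that mult_right_mono[of \<alpha> 1 "real n"] unfolding M_def by linarith
    then have "probB n \<alpha> (\<lambda>A. \<bar>real (degLcmQ A) - fdens \<alpha> * (real n)\<^sup>2\<bar> > \<epsilon> * fdens \<alpha> * (real n)\<^sup>2)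
        \<le> ?K / (\<alpha> * real n)"
      using probB_far_from_fdens_le[OF that(2,3,1) assms(1) N1] that by simp
    also have "\<dots> \<le> \<delta>"
      using that assms totient_density_pos unfolding M_def by (simp add: field_simps)
    finally show ?thesis .
  qed
  moreover have "0 < ?K / \<delta>"
    using assms totient_density_pos by (intro divide_pos_pos mult_pos_pos) auto
  then have "M > 0" unfolding M_def using max.cobounded2 by (rule less_le_trans)
  ultimately show ?thesis by blast
qed

end
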